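(* Let $G$ be a simple, undirected, connected graph on $N>2$ vertices with edge set $E$ and degree sequence $d_1\le d_2\le\cdots\le d_N$. Then $$R^+(G)\ge 2N(N-1)-\frac{4|E|}{1+d_1}.$$
   Context: For vertices $i,j$ of $G$, $R_{ij}$ denotes the effective resistance between $i$ and $j$ when every edge of $G$ is a unit resistor. The additive degree-Kirchhoff index is $R^+(G)=\sum_{i<j}(d_i+d_j)R_{ij}$, where $d_i$ is the degree of vertex $i$. *)

theory Defs
  imports Complex_Main
begin

definition simple_graph :: "'a set \<Rightarrow> ('a \<Rightarrow> 'a \<Rightarrow> bool) \<Rightarrow> bool" where
  "simple_graph V E \<longleftrightarrow> finite V \<and> (\<forall>u v. E u v \<longrightarrow> u \<in> V \<and> v \<in> V)
     \<and> (\<forall>u v. E u v \<longrightarrow> E v u) \<and> (\<forall>u. \<not> E u u)"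

definition connected_graph :: "'a set \<Rightarrow> ('a \<Rightarrow> 'a \<Rightarrow> bool) \<Rightarrow> bool" where
  "connected_graph V E \<longleftrightarrow> (\<forall>u\<in>V. \<forall>v\<in>V. (u, v) \<in> {(a, b). E a b}\<^sup>*)"

definition degree :: "'a set \<Rightarrow> ('a \<Rightarrow> 'a \<Rightarrow> bool) \<Rightarrow> 'a \<Rightarrow> nat" where
  "degree V E v = card {u \<in> V. E v u}"

definition edge_set :: "'a set \<Rightarrow> ('a \<Rightarrow> 'a \<Rightarrow> bool) \<Rightarrow> 'a set set" where
  "edge_set V E = {{u, v} | u v. u \<in> V \<and> v \<in> V \<and> E u v}"

text \<open>Effective resistance between i and j with unit resistors on every edge:
  inject a unit current at i, extract it at j; a potential x satisfies Kirchhoff's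
  current law at every vertex (Ohm's law with unit conductances), and R i j is the
  resulting potential difference x i - x j (well defined for connected graphs).\<close>
definition eff_resistance :: "'a set \<Rightarrow> ('a \<Rightarrow> 'a \<Rightarrow> bool) \<Rightarrow> 'a \<Rightarrow> 'a \<Rightarrow> real" where
  "eff_resistance V E i j = (THE r. \<exists>x :: 'a \<Rightarrow> real.
      (\<forall>v\<in>V. (\<Sum>u\<in>{u \<in> V. E v u}. x v - x u) =
               (if v = i \<and> v \<noteq> j then 1 else if v = j \<and> v \<noteq> i then -1 else 0))
      \<and> r = x i - x j)"

definition add_degree_kirchhoff :: "('a::linorder) set \<Rightarrow> ('a \<Rightarrow> 'a \<Rightarrow> bool) \<Rightarrow> real" where
  "add_degree_kirchhoff V E =
     (\<Sum>(i, j)\<in>{(i, j). i \<in> V \<and> j \<in> V \<and> i < j}.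
        real (degree V E i + degree V E j) * eff_resistance V E i j)"

end

theory Submission
  imports Defs "Jordan_Normal_Form.Determinant"
begin

text \<open>Let \<open>x\<close> be the potential of a unit current from \<open>i\<close> to \<open>j\<close>. Its energy, the
  sum of \<open>(x u - x v)\<^sup>2\<close> over the edges, equals \<open>R i j\<close>, and Cauchy-Schwarz for the
  Dirichlet form gives \<open>(f i - f j)\<^sup>2 \<le> R i j \<cdot> energy f\<close> for every \<open>f\<close> (Thomson's
  principle). For \<open>f\<close> the difference of the indicators of \<open>i\<close> and \<open>j\<close> the energy is
  \<open>d i + d j + 2 a\<close>, where \<open>a\<close> is 1 if \<open>i\<close> and \<open>j\<close> are adjacent and 0 otherwise, hence
  \<open>(d i + d j) R i j \<ge> 4 - 8 a / (d i + d j + 2) \<ge> 4 - 4 a / (1 + d\<^sub>1)\<close>. Summing over the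
  \<open>N (N - 1) / 2\<close> pairs gives the bound. The potential exists because \<open>L + J\<close> is
  invertible on a connected graph.\<close>

hide_const (open) Polynomial.degree

lemma mult_mat_vec_surj_if_inj:
  fixes A :: "real mat"
  assumes A: "A \<in> carrier_mat n n"
    and inj: "\<And>w. w \<in> carrier_vec n \<Longrightarrow> A *\<^sub>v w = 0\<^sub>v n \<Longrightarrow> w = 0\<^sub>v n"
    and b: "b \<in> carrier_vec n"
  shows "\<exists>w \<in> carrier_vec n. A *\<^sub>v w = b"
proof -
  have "det A \<noteq> 0"
    using inj det_0_iff_vec_prod_zero[OF A] by blast
  then have "A \<in> Units (ring_mat TYPE(real) n undefined)"
    by (rule det_non_zero_imp_unit[OF A])
  then obtain B where B: "B \<in> carrier_mat n n" "A * B = 1\<^sub>m n"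
    unfolding Units_def by (auto simp: ring_mat_def)
  have "A *\<^sub>v (B *\<^sub>v b) = b"
    using assoc_mult_mat_vec[OF A B(1) b] B(2) b by simp
  then show ?thesis using B(1) b by (intro bexI[of _ "B *\<^sub>v b"]) auto
qed

lemma linear_system_solvable_if_inj:
  fixes V :: "'a::linorder set" and Q :: "'a \<Rightarrow> 'a \<Rightarrow> real"
  assumes fin: "finite V"
    and inj: "\<And>x. \<forall>v\<in>V. (\<Sum>u\<in>V. Q v u * x u) = 0 \<Longrightarrow> \<forall>v\<in>V. x v = 0"
  shows "\<exists>x. \<forall>v\<in>V. (\<Sum>u\<in>V. Q v u * x u) = b v"
proof -
  define n where "n = card V"
  define g where "g = (!) (sorted_list_of_set V)"
  have bij: "bij_betw g {0..<n} V"
    unfolding g_def n_def using fin by (intro bij_betw_nth) auto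
  define h where "h = inv_into {0..<n} g"
  have gh: "\<And>u. u \<in> V \<Longrightarrow> g (h u) = u"
    unfolding h_def using bij by (meson bij_betw_inv_into_right)
  have h_lt: "\<And>u. u \<in> V \<Longrightarrow> h u < n"
    unfolding h_def using bij bij_betw_inv_into bij_betw_apply by fastforce
  have hg: "\<And>c. c < n \<Longrightarrow> h (g c) = c"
    unfolding h_def using bij bij_betw_inv_into_left by fastforce
  have reindex: "(\<Sum>u\<in>V. F u) = (\<Sum>c\<in>{0..<n}. F (g c))" for F :: "'a \<Rightarrow> real"
    using sum.reindex_bij_betw[OF bij] by metis
  define A where "A = mat n n (\<lambda>(a, c). Q (g a) (g c))"
  have A: "A \<in> carrier_mat n n" unfolding A_def by simp
  have Av: "(A *\<^sub>v w) $ h v = (\<Sum>u\<in>V. Q v u * w $ h u)"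
    if w: "w \<in> carrier_vec n" and v: "v \<in> V" for w v
    unfolding reindex using w h_lt[OF v] gh[OF v]
    by (auto simp: A_def scalar_prod_def hg intro!: sum.cong)
  have "\<exists>w \<in> carrier_vec n. A *\<^sub>v w = vec n (b \<circ> g)"
  proof (rule mult_mat_vec_surj_if_inj[OF A])
    fix w :: "real vec" assume w: "w \<in> carrier_vec n" "A *\<^sub>v w = 0\<^sub>v n"
    have "\<forall>v\<in>V. (\<Sum>u\<in>V. Q v u * w $ h u) = 0"
      using Av[OF w(1), symmetric] w(2) h_lt by simp
    then have "\<forall>v\<in>V. w $ h v = 0" by (rule inj)
    then show "w = 0\<^sub>v n"
      using w(1) bij by (intro eq_vecI) (auto simp: hg bij_betw_def)
  qed simp
  then obtain w where w: "w \<in> carrier_vec n" "A *\<^sub>v w = vec n (b \<circ> g)" by blast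
  then have "\<forall>v\<in>V. (\<Sum>u\<in>V. Q v u * w $ h u) = b v"
    using Av[OF w(1), symmetric] h_lt gh by simp
  then show ?thesis by (rule exI[of _ "\<lambda>u. w $ h u"])
qed

definition laplacian :: "'a set \<Rightarrow> ('a \<Rightarrow> 'a \<Rightarrow> bool) \<Rightarrow> ('a \<Rightarrow> real) \<Rightarrow> 'a \<Rightarrow> real" where
  "laplacian V E x v = (\<Sum>u\<in>{u \<in> V. E v u}. x v - x u)"

text \<open>The sum runs over ordered pairs, so every edge is counted twice.\<close>
definition dirichlet_form ::
    "'a set \<Rightarrow> ('a \<Rightarrow> 'a \<Rightarrow> bool) \<Rightarrow> ('a \<Rightarrow> real) \<Rightarrow> ('a \<Rightarrow> real) \<Rightarrow> real" where
  "dirichlet_form V E g h = (\<Sum>v\<in>V. \<Sum>u\<in>{u \<in> V. E v u}. (g v - g u) * (h v - h u))"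

definition unit_current :: "'a \<Rightarrow> 'a \<Rightarrow> 'a \<Rightarrow> real" where
  "unit_current i j v = (if v = i \<and> v \<noteq> j then 1 else if v = j \<and> v \<noteq> i then -1 else 0)"

definition vertex_pairs :: "('a::linorder) set \<Rightarrow> ('a \<times> 'a) set" where
  "vertex_pairs V = {(i, j). i \<in> V \<and> j \<in> V \<and> i < j}"

lemma eff_resistance_laplacian:
  "eff_resistance V E i j =
     (THE r. \<exists>x. (\<forall>v\<in>V. laplacian V E x v = unit_current i j v) \<and> r = x i - x j)"
  unfolding eff_resistance_def laplacian_def unit_current_def ..

lemma add_degree_kirchhoff_vertex_pairs:
  "add_degree_kirchhoff V E =
     (\<Sum>(i, j)\<in>vertex_pairs V. real (degree V E i + degree V E j) * eff_resistance V E i j)"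
  unfolding add_degree_kirchhoff_def vertex_pairs_def ..

lemma sum_mult_unit_current:
  assumes "finite V" "i \<in> V" "j \<in> V"
  shows "(\<Sum>v\<in>V. unit_current i j v * g v) = g i - g j"
proof (cases "i = j")
  case False
  have "(\<Sum>v\<in>V. unit_current i j v * g v)
      = (\<Sum>v\<in>V. (if v = i then g v else 0) - (if v = j then g v else 0))"
    using False by (intro sum.cong) (auto simp: unit_current_def)
  then show ?thesis using assms by (simp add: sum_subtractf)
qed (simp add: unit_current_def)

lemma sum_neighbours_swap:
  assumes "finite V" "\<And>u v. E u v \<Longrightarrow> E v u"
  shows "(\<Sum>v\<in>V. \<Sum>u\<in>{u \<in> V. E v u}. F v u) = (\<Sum>v\<in>V. \<Sum>u\<in>{u \<in> V. E v u}. F u v)"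
proof -
  have "(\<Sum>v\<in>V. \<Sum>u\<in>{u \<in> V. E v u}. F v u) = (\<Sum>u\<in>V. \<Sum>v\<in>{v \<in> V. E v u}. F v u)"
    using sum.swap_restrict[OF assms(1) assms(1), of F E] by simp
  also have "\<dots> = (\<Sum>u\<in>V. \<Sum>v\<in>{v \<in> V. E u v}. F v u)"
    using assms(2) by (intro sum.cong refl) metis
  finally show ?thesis .
qed

lemma dirichlet_form_eq_sum_laplacian:
  assumes "finite V" "\<And>u v. E u v \<Longrightarrow> E v u"
  shows "dirichlet_form V E g h = 2 * (\<Sum>v\<in>V. g v * laplacian V E h v)"
proof -
  have "dirichlet_form V E g h = (\<Sum>v\<in>V. \<Sum>u\<in>{u \<in> V. E v u}. g v * (h v - h u))
       - (\<Sum>v\<in>V. \<Sum>u\<in>{u \<in> V. E v u}. g u * (h v - h u))"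
    unfolding dirichlet_form_def by (simp add: sum_subtractf[symmetric] algebra_simps)
  also have "(\<Sum>v\<in>V. \<Sum>u\<in>{u \<in> V. E v u}. g u * (h v - h u))
     = (\<Sum>v\<in>V. \<Sum>u\<in>{u \<in> V. E v u}. g v * (h u - h v))"
    by (rule sum_neighbours_swap[OF assms])
  also have "\<dots> = - (\<Sum>v\<in>V. \<Sum>u\<in>{u \<in> V. E v u}. g v * (h v - h u))"
    by (simp add: sum_negf[symmetric] algebra_simps)
  finally show ?thesis unfolding laplacian_def by (simp add: sum_distrib_left)
qed

lemma dirichlet_form_nonneg: "0 \<le> dirichlet_form V E g g"
  unfolding dirichlet_form_def by (intro sum_nonneg) auto

lemma dirichlet_form_diff_scaled:
  "dirichlet_form V E (\<lambda>v. g v - t * f v) (\<lambda>v. g v - t * f v)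
     = dirichlet_form V E g g - 2 * t * dirichlet_form V E f g + t\<^sup>2 * dirichlet_form V E f f"
proof -
  have expand: "((g v - t * f v) - (g u - t * f u)) * ((g v - t * f v) - (g u - t * f u))
     = (g v - g u) * (g v - g u) - 2 * t * ((f v - f u) * (g v - g u))
       + t\<^sup>2 * ((f v - f u) * (f v - f u))" for u v
    by (simp add: algebra_simps power2_eq_square)
  show ?thesis unfolding dirichlet_form_def expand
    by (simp add: sum_subtractf sum.distrib sum_distrib_left)
qed

lemma nonneg_quadratic_discriminant:
  fixes a b c :: real
  assumes nonneg: "\<And>t. 0 \<le> a - 2 * t * b + t\<^sup>2 * c" and "0 \<le> c"
  shows "b\<^sup>2 \<le> a * c"
proof (cases "c = 0")
  case True
  have "b = 0"
  proof (rule ccontr)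
    assume "b \<noteq> 0"
    then show False using nonneg[of "(a + 1) / (2 * b)"] True by (simp add: field_simps)
  qed
  then show ?thesis using True by simp
next
  case False
  with \<open>0 \<le> c\<close> have "0 < c" by simp
  have "0 \<le> a - 2 * (b / c) * b + (b / c)\<^sup>2 * c" by (rule nonneg)
  also have "\<dots> = (a * c - b\<^sup>2) / c" using \<open>0 < c\<close> by (simp add: field_simps power2_eq_square)
  finally show ?thesis using \<open>0 < c\<close> by (simp add: zero_le_divide_iff)
qed

lemma dirichlet_form_cauchy_schwarz:
  "(dirichlet_form V E f g)\<^sup>2 \<le> dirichlet_form V E g g * dirichlet_form V E f f"
  by (rule nonneg_quadratic_discriminant)
    (simp_all only: dirichlet_form_diff_scaled[symmetric] dirichlet_form_nonneg)

lemma sum_laplacian_eq_0: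
  assumes "finite V" "\<And>u v. E u v \<Longrightarrow> E v u"
  shows "(\<Sum>v\<in>V. laplacian V E x v) = 0"
  using dirichlet_form_eq_sum_laplacian[OF assms, where g = "\<lambda>_. 1" and h = x]
  by (simp add: dirichlet_form_def)

lemma harmonic_imp_constant:
  assumes sg: "simple_graph V E" and cg: "connected_graph V E"
    and harmonic: "\<forall>v\<in>V. laplacian V E z v = 0" and "u \<in> V" "v \<in> V"
  shows "z u = z v"
proof -
  have fin: "finite V" and sym: "\<And>u v. E u v \<Longrightarrow> E v u"
    and inV: "\<And>u v. E u v \<Longrightarrow> u \<in> V \<and> v \<in> V"
    using sg unfolding simple_graph_def by blast+
  have "dirichlet_form V E z z = 0"
    using dirichlet_form_eq_sum_laplacian[OF fin sym, where g = z and h = z] harmonic by simp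
  then have "\<forall>v\<in>V. (\<Sum>u\<in>{u \<in> V. E v u}. (z v - z u) * (z v - z u)) = 0"
    unfolding dirichlet_form_def using fin
    by (subst (asm) sum_nonneg_eq_0_iff) (auto intro!: sum_nonneg)
  then have edge: "\<And>a b. E a b \<Longrightarrow> z a = z b"
    using fin inV by (fastforce simp: sum_nonneg_eq_0_iff)
  have "(u, v) \<in> {(a, b). E a b}\<^sup>*"
    using cg \<open>u \<in> V\<close> \<open>v \<in> V\<close> unfolding connected_graph_def by blast
  then show ?thesis by (induction rule: rtrancl_induct) (auto dest: edge)
qed

lemma laplacian_plus_all_ones:
  assumes "finite V" "v \<in> V"
  shows "(\<Sum>u\<in>V. ((if u = v then real (degree V E v) else 0) - (if E v u then 1 else 0) + 1) * x u)
     = laplacian V E x v + sum x V"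
proof -
  have "(\<Sum>u\<in>V. ((if u = v then real (degree V E v) else 0) - (if E v u then 1 else 0) + 1) * x u)
     = (\<Sum>u\<in>V. if u = v then real (degree V E v) * x u else 0)
       - (\<Sum>u\<in>V. if E v u then x u else 0) + sum x V"
  proof -
    have "((if u = v then real (degree V E v) else 0) - (if E v u then 1 else 0) + 1) * x u
       = (if u = v then real (degree V E v) * x u else 0) - (if E v u then x u else 0) + x u" for u
      by (auto simp: algebra_simps)
    then show ?thesis by (simp add: sum_subtractf sum.distrib)
  qed
  also have "\<dots> = real (degree V E v) * x v - (\<Sum>u\<in>{u \<in> V. E v u}. x u) + sum x V"
    using assms by (simp add: sum.inter_filter)
  also have "\<dots> = laplacian V E x v + sum x V"
    unfolding laplacian_def Defs.degree_def using assms by (simp add: sum_subtractf)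
  finally show ?thesis .
qed

text \<open>The Laplacian \<open>L\<close> is singular, so solve with \<open>L + J\<close> (\<open>J\<close> the all-ones matrix)
  instead: its kernel is trivial because harmonic functions are constant, and a solution
  of \<open>L x + J x = b\<close> with \<open>\<Sum> b = 0\<close> has \<open>\<Sum> x = 0\<close>.\<close>
lemma poisson_solvable:
  fixes V :: "'a::linorder set"
  assumes sg: "simple_graph V E" and cg: "connected_graph V E" and b: "(\<Sum>v\<in>V. b v) = 0"
  shows "\<exists>x. \<forall>v\<in>V. laplacian V E x v = b v"
proof -
  have fin: "finite V" and sym: "\<And>u v. E u v \<Longrightarrow> E v u"
    using sg unfolding simple_graph_def by blast+
  define Q where
    "Q v u = (if u = v then real (degree V E v) else 0) - (if E v u then 1 else 0) + 1" for v u
  have Q: "(\<Sum>u\<in>V. Q v u * x u) = laplacian V E x v + sum x V" if "v \<in> V" for x v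
    unfolding Q_def using laplacian_plus_all_ones[OF fin that] .
  have sum_zero: "sum x V = 0" if "\<forall>v\<in>V. laplacian V E x v + sum x V = c v" "sum c V = 0" for x c
  proof -
    have "sum c V = (\<Sum>v\<in>V. laplacian V E x v + sum x V)"
      using that(1) by (intro sum.cong) auto
    also have "\<dots> = real (card V) * sum x V"
      using sum_laplacian_eq_0[OF fin sym] by (simp add: sum.distrib)
    finally have "real (card V) * sum x V = 0" using that(2) by simp
    then show ?thesis using fin by (cases "V = {}") auto
  qed
  have "\<exists>x. \<forall>v\<in>V. (\<Sum>u\<in>V. Q v u * x u) = b v"
  proof (rule linear_system_solvable_if_inj[OF fin])
    fix x assume "\<forall>v\<in>V. (\<Sum>u\<in>V. Q v u * x u) = 0"
    then have kernel: "\<forall>v\<in>V. laplacian V E x v + sum x V = 0" using Q by simp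
    then have sum0: "sum x V = 0" by (rule sum_zero) simp
    with kernel have harmonic: "\<forall>v\<in>V. laplacian V E x v = 0" by simp
    show "\<forall>v\<in>V. x v = 0"
    proof
      fix v assume v: "v \<in> V"
      have "\<forall>u\<in>V. x u = x v" using harmonic_imp_constant[OF sg cg harmonic _ v] by blast
      then have "sum x V = real (card V) * x v" by simp
      then show "x v = 0" using sum0 fin v by (cases "V = {}") auto
    qed
  qed
  then obtain x where x: "\<forall>v\<in>V. laplacian V E x v + sum x V = b v" using Q by auto
  then have "sum x V = 0" using b by (rule sum_zero)
  with x show ?thesis by auto
qed

lemma eff_resistance_eq_potential_difference:
  assumes sg: "simple_graph V E" and cg: "connected_graph V E" and "i \<in> V" "j \<in> V"
    and x: "\<forall>v\<in>V. laplacian V E x v = unit_current i j v"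
  shows "eff_resistance V E i j = x i - x j"
  unfolding eff_resistance_laplacian
proof (rule the_equality)
  show "\<exists>y. (\<forall>v\<in>V. laplacian V E y v = unit_current i j v) \<and> x i - x j = y i - y j"
    using x by blast
next
  fix r assume "\<exists>y. (\<forall>v\<in>V. laplacian V E y v = unit_current i j v) \<and> r = y i - y j"
  then obtain y where y: "\<forall>v\<in>V. laplacian V E y v = unit_current i j v" and r: "r = y i - y j"
    by blast
  have "laplacian V E (\<lambda>v. y v - x v) v = laplacian V E y v - laplacian V E x v" for v
    unfolding laplacian_def by (simp add: sum_subtractf[symmetric] algebra_simps)
  then have "\<forall>v\<in>V. laplacian V E (\<lambda>v. y v - x v) v = 0" using x y by simp
  from harmonic_imp_constant[OF sg cg this \<open>i \<in> V\<close> \<open>j \<in> V\<close>] show "r = x i - x j"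
    using r by simp
qed

text \<open>Cauchy-Schwarz against the unit-current potential, whose energy is \<open>R\<^sub>i\<^sub>j\<close>.\<close>
lemma eff_resistance_thomson_bound:
  fixes V :: "'a::linorder set"
  assumes sg: "simple_graph V E" and cg: "connected_graph V E" and i: "i \<in> V" and j: "j \<in> V"
  shows "2 * (f i - f j)\<^sup>2 \<le> dirichlet_form V E f f * eff_resistance V E i j"
proof -
  have fin: "finite V" and sym: "\<And>u v. E u v \<Longrightarrow> E v u"
    using sg unfolding simple_graph_def by blast+
  have "(\<Sum>v\<in>V. unit_current i j v) = 0"
    using sum_mult_unit_current[OF fin i j, of "\<lambda>_. 1"] by simp
  then obtain x where x: "\<forall>v\<in>V. laplacian V E x v = unit_current i j v"
    using poisson_solvable[OF sg cg] by blast
  have energy: "dirichlet_form V E g x = 2 * (g i - g j)" for g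
    using x sum_mult_unit_current[OF fin i j, of g]
    by (simp add: dirichlet_form_eq_sum_laplacian[OF fin sym] mult.commute)
  have Rx: "dirichlet_form V E x x = 2 * eff_resistance V E i j"
    using energy[of x] eff_resistance_eq_potential_difference[OF sg cg i j x] by simp
  define \<delta> where "\<delta> = f i - f j"
  have "(2 * \<delta>)\<^sup>2 \<le> 2 * eff_resistance V E i j * dirichlet_form V E f f"
    using dirichlet_form_cauchy_schwarz[of V E f x] Rx unfolding energy[of f] \<delta>_def[symmetric]
    by simp
  then have "4 * \<delta>\<^sup>2 \<le> 2 * (dirichlet_form V E f f * eff_resistance V E i j)"
    by (simp add: power_mult_distrib mult_ac)
  then show ?thesis unfolding \<delta>_def[symmetric] by linarith
qed

lemma laplacian_unit_current:
  assumes sg: "simple_graph V E" and "i \<in> V" "j \<in> V" "i \<noteq> j"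
  shows "laplacian V E (unit_current i j) i = real (degree V E i) + (if E i j then 1 else 0)"
    and "laplacian V E (unit_current i j) j = - (real (degree V E j) + (if E i j then 1 else 0))"
proof -
  have fin: "finite V" and sym: "\<And>u v. E u v \<Longrightarrow> E v u" and irr: "\<And>u. \<not> E u u"
    using sg unfolding simple_graph_def by blast+
  have "laplacian V E (unit_current i j) i = (\<Sum>u\<in>{u \<in> V. E i u}. 1 + (if u = j then 1 else 0))"
    unfolding laplacian_def unit_current_def using assms irr by (intro sum.cong) auto
  then show "laplacian V E (unit_current i j) i = real (degree V E i) + (if E i j then 1 else 0)"
    using fin assms by (simp add: sum.distrib Defs.degree_def)
  have "laplacian V E (unit_current i j) j = (\<Sum>u\<in>{u \<in> V. E j u}. - 1 - (if u = i then 1 else 0))"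
    unfolding laplacian_def unit_current_def using assms irr by (intro sum.cong) auto
  then show "laplacian V E (unit_current i j) j = - (real (degree V E j) + (if E i j then 1 else 0))"
    using fin assms sym by (simp add: sum_subtractf Defs.degree_def)
qed

lemma eff_resistance_ge_degrees:
  fixes V :: "'a::linorder set"
  assumes sg: "simple_graph V E" and cg: "connected_graph V E"
    and i: "i \<in> V" and j: "j \<in> V" and "i \<noteq> j"
  shows "4 \<le> (real (degree V E i + degree V E j) + (if E i j then 2 else 0)) * eff_resistance V E i j"
proof -
  have fin: "finite V" and sym: "\<And>u v. E u v \<Longrightarrow> E v u"
    using sg unfolding simple_graph_def by blast+
  define K where "K = real (degree V E i + degree V E j) + (if E i j then 2 else 0)"
  have "dirichlet_form V E (unit_current i j) (unit_current i j) = 2 * K"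
    using sum_mult_unit_current[OF fin i j, of "laplacian V E (unit_current i j)"]
      laplacian_unit_current[OF sg i j \<open>i \<noteq> j\<close>]
    by (simp add: dirichlet_form_eq_sum_laplacian[OF fin sym] K_def)
  moreover have "unit_current i j i - unit_current i j j = 2"
    using \<open>i \<noteq> j\<close> by (simp add: unit_current_def)
  ultimately have "8 \<le> 2 * (K * eff_resistance V E i j)"
    using eff_resistance_thomson_bound[OF sg cg i j, of "unit_current i j"] by (simp add: mult.assoc)
  then show ?thesis unfolding K_def[symmetric] by linarith
qed

lemma degree_pair_term_bound:
  fixes d D R :: real
  assumes "0 \<le> d" "2 * d \<le> D" "4 \<le> (D + 2) * R"
  shows "4 - 4 / (1 + d) \<le> D * R"
proof -
  have "4 / (D + 2) \<le> R" using assms by (simp add: field_simps)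
  then have "D * (4 / (D + 2)) \<le> D * R" using assms by (intro mult_left_mono) auto
  moreover have "D * (4 / (D + 2)) = 4 - 8 / (D + 2)" using assms by (simp add: field_simps)
  moreover have "8 / (D + 2) \<le> 4 / (1 + d)" using assms by (simp add: field_simps)
  ultimately show ?thesis by linarith
qed

lemma kirchhoff_term_lower_bound:
  fixes V :: "'a::linorder set"
  assumes sg: "simple_graph V E" and cg: "connected_graph V E" and "(i, j) \<in> vertex_pairs V"
  shows "4 - (if E i j then 4 / (1 + real (Min (degree V E ` V))) else 0)
      \<le> real (degree V E i + degree V E j) * eff_resistance V E i j"
proof -
  have fin: "finite V" using sg unfolding simple_graph_def by blast
  have i: "i \<in> V" and j: "j \<in> V" and "i \<noteq> j" using assms(3) by (auto simp: vertex_pairs_def)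
  note R = eff_resistance_ge_degrees[OF sg cg i j \<open>i \<noteq> j\<close>]
  show ?thesis
  proof (cases "E i j")
    case True
    have min_le: "real (Min (degree V E ` V)) \<le> real (degree V E v)" if "v \<in> V" for v
      using fin that by simp
    have "2 * real (Min (degree V E ` V)) \<le> real (degree V E i) + real (degree V E j)"
      using min_le[OF i] min_le[OF j] by linarith
    then have "4 - 4 / (1 + real (Min (degree V E ` V)))
        \<le> (real (degree V E i) + real (degree V E j)) * eff_resistance V E i j"
      using True R by (intro degree_pair_term_bound) auto
    then show ?thesis using True by simp
  qed (use R in simp)
qed

lemma finite_vertex_pairs: "finite V \<Longrightarrow> finite (vertex_pairs V)"
  by (rule finite_subset[of _ "V \<times> V"]) (auto simp: vertex_pairs_def)

lemma card_vertex_pairs: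
  fixes V :: "'a::linorder set"
  assumes "finite V"
  shows "2 * real (card (vertex_pairs V)) = real (card V) * (real (card V) - 1)"
proof -
  define P where "P = vertex_pairs V"
  define D where "D = (\<lambda>i. (i, i)) ` V"
  have VV: "V \<times> V = D \<union> (P \<union> prod.swap ` P)"
    unfolding D_def P_def vertex_pairs_def by (auto simp: image_iff)
  have fP: "finite P" using assms unfolding P_def by (rule finite_vertex_pairs)
  have cD: "card D = card V" unfolding D_def by (rule card_image) (auto simp: inj_on_def)
  have "card (prod.swap ` P) = card P" by (rule card_image) (auto simp: inj_on_def)
  moreover have "finite D" unfolding D_def using assms by simp
  moreover have "P \<inter> prod.swap ` P = {}" "D \<inter> (P \<union> prod.swap ` P) = {}"
    unfolding P_def D_def vertex_pairs_def by auto
  ultimately have "card (V \<times> V) = card D + (card P + card P)"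
    unfolding VV using fP by (simp add: card_Un_disjoint)
  then have "card V * card V = card V + 2 * card P" using cD by (simp add: card_cartesian_product)
  then have "real (card V) * real (card V) = real (card V) + 2 * real (card P)"
    by (metis of_nat_add of_nat_mult of_nat_numeral)
  then show ?thesis unfolding P_def by (simp add: algebra_simps)
qed

lemma card_adjacent_vertex_pairs:
  fixes V :: "'a::linorder set"
  assumes sg: "simple_graph V E"
  shows "card {p \<in> vertex_pairs V. E (fst p) (snd p)} = card (edge_set V E)"
proof -
  have sym: "\<And>u v. E u v \<Longrightarrow> E v u" and irr: "\<And>u. \<not> E u u"
    using sg unfolding simple_graph_def by blast+
  define S where "S = {p \<in> vertex_pairs V. E (fst p) (snd p)}"
  have inj: "inj_on (\<lambda>(i, j). {i, j}) S"
    unfolding S_def vertex_pairs_def inj_on_def by (auto simp: doubleton_eq_iff)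
  have img: "(\<lambda>(i, j). {i, j}) ` S = edge_set V E"
  proof
    show "(\<lambda>(i, j). {i, j}) ` S \<subseteq> edge_set V E"
      unfolding S_def vertex_pairs_def edge_set_def by fastforce
  next
    show "edge_set V E \<subseteq> (\<lambda>(i, j). {i, j}) ` S"
    proof
      fix e assume "e \<in> edge_set V E"
      then obtain u v where e: "e = {u, v}" "u \<in> V" "v \<in> V" "E u v"
        unfolding edge_set_def by auto
      with irr consider "u < v" | "v < u" by (metis linorder_neqE)
      then show "e \<in> (\<lambda>(i, j). {i, j}) ` S"
      proof cases
        case 1
        then show ?thesis using e unfolding S_def vertex_pairs_def
          by (auto intro!: image_eqI[of _ _ "(u, v)"])
      next
        case 2
        then show ?thesis using e sym unfolding S_def vertex_pairs_def
          by (auto intro!: image_eqI[of _ _ "(v, u)"])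
      qed
    qed
  qed
  show ?thesis using card_image[OF inj] img unfolding S_def by simp
qed

theorem corollary2:
  fixes V :: "('a::linorder) set" and E :: "'a \<Rightarrow> 'a \<Rightarrow> bool"
  assumes "simple_graph V E"
    and "connected_graph V E"
    and "card V > 2"
  shows "add_degree_kirchhoff V E \<ge>
           2 * real (card V) * (real (card V) - 1)
           - 4 * real (card (edge_set V E)) / (1 + real (Min (degree V E ` V)))"
proof -
  have fin: "finite V" using assms(1) unfolding simple_graph_def by blast
  define c where "c = 4 / (1 + real (Min (degree V E ` V)))"
  have fP: "finite (vertex_pairs V)" using fin by (rule finite_vertex_pairs)
  have "(\<Sum>(i, j)\<in>vertex_pairs V. 4 - (if E i j then c else 0)) \<le> add_degree_kirchhoff V E"
    unfolding add_degree_kirchhoff_vertex_pairs c_def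
    using kirchhoff_term_lower_bound[OF assms(1,2)] by (intro sum_mono) auto
  moreover have "(\<Sum>(i, j)\<in>vertex_pairs V. 4 - (if E i j then c else 0))
      = 4 * real (card (vertex_pairs V)) - c * real (card {p \<in> vertex_pairs V. E (fst p) (snd p)})"
    using fP by (simp add: sum_subtractf case_prod_beta sum.inter_filter[symmetric])
  ultimately show ?thesis
    using card_vertex_pairs[OF fin] card_adjacent_vertex_pairs[OF assms(1)]
    unfolding c_def by (simp add: algebra_simps)
qed

end
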